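(* For $k\ge4$, $\Phi_k(d_{\mathrm{lbd}}(k),x)>0$ for all $x\in[\frac12-\frac1{2^k},\frac12]$.
   Context: $\Phi_k(d,x)=-\log(1-x)-d(1-k^{-1}-d^{-1})\log(1-2x^k)+(d-1)\log(1-x^{k-1})$; $d_{\mathrm{lbd}}(4)=16.7$, $d_{\mathrm{lbd}}(k)=(2^{k-1}-2)k\log2$ for $k\ge5$. *)

theory Defs
  imports Complex_Main
begin

definition Phi :: "nat \<Rightarrow> real \<Rightarrow> real \<Rightarrow> real" where
  "Phi k d x = - ln (1 - x) - d * (1 - 1 / real k - 1 / d) * ln (1 - 2 * x ^ k)
              + (d - 1) * ln (1 - x ^ (k - 1))"

definition d_lbd :: "nat \<Rightarrow> real" where
  "d_lbd k = (if k = 4 then 16.7 else (2 ^ (k - 1) - 2) * real k * ln 2)"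

end

theory Submission
  imports Defs
begin

(* Put y = 1 - 2x, so that 0 <= y <= 2^(1-k), and bound the three logarithms in Phi_k by
   Taylor polynomials: -ln(1-x) >= ln 2 - y, -ln(1-u) >= u + u^2/2 and
   ln(1-v) >= -v - v^2/2 - v^3/(3(1-v)), where u = 2x^k and v = x^(k-1).
   For k = 4 the minorant is a polynomial in y plus a tiny remainder, positive on [0,1/8]
   as soon as ln 2 >= 0.69.
   For k >= 5 write N = 2^(k-1), so that d_lbd(k) = (N-2) k ln 2. This choice of d makes the
   constant terms ln 2 of the minorant cancel; in the scaled variable t = N y, which lies in
   [0,1], 2N^2 times the minorant is at least N (3 ln 2 - 2t) + 2t - 2k ln 2 / 3, the remaining
   terms forming a nonnegative quadratic in t once N >= 2k + 4. This is positive because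
   3 ln 2 > 2 and N >= 8k - 24. *)

lemma ln_one_minus_le:
  fixes u :: real
  assumes "0 \<le> u" "u < 1"
  shows "ln (1 - u) \<le> - u - u^2/2"
proof -
  let ?f = "\<lambda>z::real. - z - z^2/2 - ln (1 - z)"
  have "?f 0 \<le> ?f u"
  proof (rule DERIV_nonneg_imp_nondecreasing[OF assms(1)])
    fix z :: real assume "0 \<le> z" "z \<le> u"
    then have "z < 1" using assms by simp
    then have "(?f has_real_derivative z^2/(1 - z)) (at z)"
      by - ((rule derivative_eq_intros refl | simp)+,
            simp add: divide_simps power2_eq_square, algebra)
    moreover have "0 \<le> z^2/(1 - z)" using \<open>z < 1\<close> by simp
    ultimately show "\<exists>y. (?f has_real_derivative y) (at z) \<and> 0 \<le> y" by blast
  qed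
  then show ?thesis by simp
qed

lemma ln_one_minus_ge:
  fixes v :: real
  assumes "0 \<le> v" "v < 1"
  shows "- v - v^2/2 - v^3/(3*(1 - v)) \<le> ln (1 - v)"
proof -
  let ?f = "\<lambda>z::real. ln (1 - z) + z + z^2/2 + z^3/(3*(1 - z))"
  have "?f 0 \<le> ?f v"
  proof (rule DERIV_nonneg_imp_nondecreasing[OF assms(1)])
    fix z :: real assume "0 \<le> z" "z \<le> v"
    then have "z < 1" using assms by simp
    then have "(?f has_real_derivative z^3/(3*(1 - z)^2)) (at z)"
      by - ((rule derivative_eq_intros refl | simp)+,
            simp add: divide_simps power2_eq_square power3_eq_cube, algebra)
    moreover have "0 \<le> z^3/(3*(1 - z)^2)" using \<open>0 \<le> z\<close> by simp
    ultimately show "\<exists>y. (?f has_real_derivative y) (at z) \<and> 0 \<le> y" by blast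
  qed
  then show ?thesis by simp
qed

lemma ln_2_ge: "69/100 \<le> (ln 2 :: real)"
proof -
  let ?f = "\<lambda>z::real. ln (1 + z) - ln (1 - z) - 2*z - 2*z^3/3"
  have "?f 0 \<le> ?f (1/3)"
  proof (rule DERIV_nonneg_imp_nondecreasing[of 0 "1/3"])
    fix z :: real assume z: "0 \<le> z" "z \<le> 1/3"
    then have "1 - z^2 > 0" using abs_square_less_1[of z] by simp
    with z have "(?f has_real_derivative 2*z^4/(1 - z^2)) (at z)"
      by - ((rule derivative_eq_intros refl | simp)+,
            simp add: divide_simps power2_eq_square power3_eq_cube power4_eq_xxxx, algebra)
    moreover have "0 \<le> 2*z^4/(1 - z^2)" using \<open>1 - z^2 > 0\<close> by simp
    ultimately show "\<exists>y. (?f has_real_derivative y) (at z) \<and> 0 \<le> y" by blast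
  qed simp
  moreover have "ln (1 + 1/3) - ln (1 - 1/3) = (ln 2 :: real)"
    using ln_div[of "4/3" "2/3"] by simp
  ultimately show ?thesis by (simp add: power3_eq_cube)
qed

lemma one_minus_power_Suc_ge:
  fixes a :: real
  assumes "0 \<le> a" "a \<le> 1"
  shows "(real n + 1) * (1 - a) * a^n \<le> 1 - a^Suc n"
proof -
  have "(real n + 1) * a^n = (\<Sum>i\<le>n. a^n)" by simp
  also have "\<dots> \<le> (\<Sum>i\<le>n. a^i)"
    using assms by (intro sum_mono power_decreasing) auto
  finally have "(1 - a) * ((real n + 1) * a^n) \<le> (1 - a) * (\<Sum>i\<le>n. a^i)"
    using assms by (intro mult_left_mono) auto
  then show ?thesis by (simp only: sum_gp_basic) (simp add: algebra_simps)
qed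

lemma one_minus_power_Suc_mul_ge:
  fixes y :: real
  assumes "0 \<le> y" "y \<le> 1"
  shows "(real m + 1) * (real m + 2) * y^2 * (1 - y)^m / 2
           \<le> 1 - (1 - y)^Suc m * (1 + (real m + 1) * y)"
proof (induction m)
  case 0
  then show ?case by (simp add: algebra_simps power2_eq_square)
next
  case (Suc m)
  have "(real (Suc m) + 1) * (real (Suc m) + 2) * y^2 * (1 - y)^Suc m / 2
        = (1 - y) * ((real m + 1) * (real m + 2) * y^2 * (1 - y)^m / 2)
          + y * ((real (Suc m) + 1) * (1 - (1 - y)) * (1 - y)^Suc m)"
    by (simp add: field_simps power2_eq_square)
  also have "\<dots> \<le> (1 - y) * (1 - (1 - y)^Suc m * (1 + (real m + 1) * y))
                     + y * (1 - (1 - y)^Suc (Suc m))"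
    using Suc assms one_minus_power_Suc_ge[of "1 - y" "Suc m"]
    by (intro add_mono mult_left_mono) auto
  also have "\<dots> = 1 - (1 - y)^Suc (Suc m) * (1 + (real (Suc m) + 1) * y)"
    by (simp add: algebra_simps)
  finally show ?case .
qed

lemma one_minus_power_mul_ge:
  fixes y :: real
  assumes "0 \<le> y" "y \<le> 1" "1 \<le> n"
  shows "real n * (real n + 1) * y^2 * (1 - (real n - 1) * y) / 2
           \<le> 1 - (1 - y)^n * (1 + real n * y)"
proof -
  obtain m where n: "n = Suc m" using assms(3) by (cases n) auto
  have "1 - real m * y \<le> (1 - y)^m"
    using Bernoulli_inequality[of "- y" m] assms by simp
  then have "real n * (real n + 1) * y^2 / 2 * (1 - (real n - 1) * y)
             \<le> real n * (real n + 1) * y^2 / 2 * (1 - y)^m"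
    using n by (intro mult_left_mono) auto
  also have "\<dots> \<le> 1 - (1 - y)^n * (1 + real n * y)"
    using one_minus_power_Suc_mul_ge[OF assms(1,2), of m] n by (simp add: algebra_simps)
  finally show ?thesis by simp
qed

lemma linear_le_two_power: "4 \<le> n \<Longrightarrow> 8 * real n - 16 \<le> 2^n"
proof (induction n rule: dec_induct)
  case base
  then show ?case by simp
next
  case (step n)
  have "(2::real)^4 \<le> 2^n" using step.hyps(1) by (intro power_increasing) auto
  then show ?case using step.IH by simp
qed

lemma Phi_ge_minorant:
  fixes k :: nat and d x :: real
  defines "u \<equiv> 2 * x^k" and "v \<equiv> x^(k - 1)"
  assumes "2 \<le> k" "0 \<le> x" "x \<le> 1/2" "0 \<le> d * (1 - 1/k - 1/d)" "1 \<le> d"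
  shows "ln 2 - (1 - 2*x) + d * (1 - 1/k - 1/d) * (u + u^2/2)
           - (d - 1) * (v + v^2/2 + v^3/(3*(1 - v))) \<le> Phi k d x"
proof -
  define A where "A = d * (1 - 1/k - 1/d)"
  define B where "B = d - 1"
  have "0 \<le> A" "0 \<le> B" using assms(6,7) unfolding A_def B_def by simp_all
  have "v \<le> x" unfolding v_def using power_decreasing[of 1 "k - 1" x] assms(3-5) by simp
  have "u = (2*x) * v" unfolding u_def v_def using assms(3) by (simp flip: power_Suc)
  then have "u \<le> v"
    using assms(4,5) \<open>v \<le> x\<close> by (simp add: mult_left_le_one_le v_def)
  have "0 \<le> u" "0 \<le> v" using assms(4) unfolding u_def v_def by simp_all
  have "ln (1 - x) = ln (1 + (1 - 2*x)) - ln 2"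
    using ln_div[of "1 + (1 - 2*x)" 2] assms(5) by (simp add: diff_divide_distrib)
  then have "ln 2 - (1 - 2*x) \<le> - ln (1 - x)"
    using ln_add_one_self_le_self[of "1 - 2*x"] assms(5) by simp
  moreover have "A * (u + u^2/2) \<le> - (A * ln (1 - u))"
    using mult_left_mono[OF ln_one_minus_le \<open>0 \<le> A\<close>, of u]
      \<open>0 \<le> u\<close> \<open>u \<le> v\<close> \<open>v \<le> x\<close> assms(5)
    by (simp add: algebra_simps)
  moreover have "- (B * (v + v^2/2 + v^3/(3*(1 - v)))) \<le> B * ln (1 - v)"
    using mult_left_mono[OF ln_one_minus_ge \<open>0 \<le> B\<close>, of v]
      \<open>0 \<le> v\<close> \<open>v \<le> x\<close> assms(5)
    by (simp add: algebra_simps)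
  ultimately show ?thesis
    unfolding Phi_def u_def[symmetric] v_def[symmetric] A_def[symmetric] B_def[symmetric]
    by linarith
qed

text \<open>Here \<open>461/40\<close> and \<open>157/10\<close> are \<open>d (1 - 1/4 - 1/d)\<close> and \<open>d - 1\<close>
  for \<open>d = 16.7\<close>.\<close>

lemma Phi_4_pos:
  fixes x :: real
  assumes "7/16 \<le> x" "x \<le> 1/2"
  shows "0 < Phi 4 16.7 x"
proof -
  define y where "y = 1 - 2*x"
  define u where "u = 2 * x^4"
  define v where "v = x^3"
  define c where "c = v^3/(3*(1 - v))"
  have y: "0 \<le> y" "y \<le> 1/8" using assms unfolding y_def by simp_all
  have x: "x = (1 - y)/2" unfolding y_def by simp
  have "0 \<le> v" "v \<le> 1/8"
    unfolding v_def using assms power_mono[of x "1/2" 3] by (simp_all add: power_divide)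
  have "ln 2 - y + 461/40 * (u + u^2/2) - 157/10 * (v + v^2/2 + c) \<le> Phi 4 16.7 x"
    using Phi_ge_minorant[of 4 x "16.7"] assms unfolding u_def v_def y_def c_def by simp
  moreover have "c \<le> 1/1344"
  proof -
    have "c \<le> (1/8)^3/(3*(7/8))"
      unfolding c_def using \<open>0 \<le> v\<close> \<open>v \<le> 1/8\<close>
      by (intro frac_le power_mono) auto
    also have "\<dots> = 1/1344" by (simp add: power3_eq_cube)
    finally show ?thesis .
  qed
  moreover have "ln 2 - y + 461/40 * (u + u^2/2) - 157/10 * (v + v^2/2 + c)
      = ln 2 - 157/10 * c - 2839/5120 - 55/64*y
        + (y^2*(55/16 - 4089/640*y) + y^4*(15113/2560 - 689/160*y)
           + y^6*(307/128 - 461/640*y) + 461/5120*y^8)"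
    unfolding u_def v_def x by (simp add: field_simps) algebra
  moreover have "0 \<le> y^2*(55/16 - 4089/640*y) + y^4*(15113/2560 - 689/160*y)
         + y^6*(307/128 - 461/640*y) + 461/5120*y^8"
    using y by (intro add_nonneg_nonneg mult_nonneg_nonneg) auto
  ultimately show ?thesis using ln_2_ge y by linarith
qed

text \<open>The expression below is \<open>2 N\<^sup>2\<close> times the sum of the bounds of
  \<open>Phi_large_k.part_bounds_sum_pos\<close>, written in \<open>t = N y\<close> and with a nonnegative
  term dropped.\<close>

lemma scaled_minorant_pos:
  fixes n N L t :: real
  assumes "4 \<le> n" "8 * n - 16 \<le> N" "69/100 \<le> L" "0 \<le> t" "t \<le> 1"
  shows "0 < N * (3*L - 2*t) + 2*L + L * n * (n + 1) * t^2 + 2*t - 2 * n * L * t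
             - 2 * (n + 1) * L/3
             - (L * n * (n + 1) * (n - 1) * t^3 + 4 * L * n^2 * t^2 + 2 * n * t^2) / N"
proof -
  note n = assms(1)
  have "2 * n + 6 \<le> N" "0 < N" using n assms(2) by linarith+
  have "L * (n + 1) * (n - 1) * t \<le> L * (n + 1) * (n - 1)"
    using assms(3-5) n by (intro mult_left_le) auto
  also have "\<dots> + 4 * L * n + 2 \<le> L * (n + 1) * N / 2"
  proof -
    have "L * (n + 1) * (2 * n + 6) \<le> L * (n + 1) * N"
      using \<open>2 * n + 6 \<le> N\<close> assms(3) n by (intro mult_left_mono) auto
    then show ?thesis using assms(3) by (simp add: algebra_simps)
  qed
  finally have "n * t^2 * (L * (n + 1) * (n - 1) * t + 4 * L * n + 2)
                \<le> n * t^2 * (L * (n + 1) * N / 2)"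
    using n by (intro mult_left_mono) auto
  then have cubic: "(L * n * (n + 1) * (n - 1) * t^3 + 4 * L * n^2 * t^2 + 2 * n * t^2) / N
                    \<le> L * n * (n + 1) * t^2 / 2"
    using \<open>0 < N\<close>
    by (simp add: divide_simps algebra_simps power2_eq_square power3_eq_cube)
  have "L * n * (n + 1) * t^2 / 2 + 2*L - 2 * n * L * t = L/2 * (n*t - 2)^2 + L * n * t^2 / 2"
    by (simp add: field_simps power2_eq_square)
  moreover have "0 \<le> L/2 * (n*t - 2)^2 + L * n * t^2 / 2" using assms(3) n by simp
  ultimately have square: "0 \<le> L * n * (n + 1) * t^2 / 2 + 2*L - 2 * n * L * t" by linarith
  have "0 < (n - 4) * (70*L/3 - 16) + (134*L/3 - 30)"
    using mult_nonneg_nonneg[of "n - 4" "70*L/3 - 16"] n assms(3) by linarith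
  also have "\<dots> = (8*n - 16) * (3*L - 2) + 2 - 2 * (n + 1) * L/3"
    by (simp add: field_simps)
  also have "\<dots> \<le> N * (3*L - 2) + 2 - 2 * (n + 1) * L/3"
    using assms(2,3) mult_right_mono[of "8*n - 16" N "3*L - 2"] by simp
  also have "\<dots> \<le> N * (3*L - 2*t) + 2*t - 2 * (n + 1) * L/3"
    using mult_nonneg_nonneg[of "N - 1" "1 - t"] \<open>2 * n + 6 \<le> N\<close> assms(5) n
    by (simp add: algebra_simps)
  finally have linear: "0 < N * (3*L - 2*t) + 2*t - 2 * (n + 1) * L/3" .
  show ?thesis using cubic square linear by linarith
qed

text \<open>The setting \<open>k = n + 1 \<ge> 5\<close>: the parameters stand for \<open>N = 2\<^sup>n\<close>,
  \<open>L = ln 2\<close> and \<open>y = 1 - 2 x\<close>, but only the inequalities below are assumed. With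
  \<open>d = (N - 2) k L\<close>, \<open>A\<close> and \<open>B\<close> are the coefficients \<open>d (1 - 1/k - 1/d)\<close> and
  \<open>d - 1\<close> of \<open>Phi\<close>, and \<open>u = 2 x\<^sup>k\<close>, \<open>v = x\<^sup>n\<close>.\<close>

locale Phi_large_k =
  fixes n :: nat and N L y :: real
  assumes n_ge_4: "4 \<le> n"
    and N_ge: "8 * real n - 16 \<le> N"
    and L_ge: "69/100 \<le> L"
    and y_nonneg: "0 \<le> y"
    and y_le: "y \<le> 1/N"
begin

definition "w = (1 - y)^n"
definition "A = (N - 2) * real n * L - 1"
definition "B = (N - 2) * (real n + 1) * L - 1"
definition "u = (1 - y) * w / N"
definition "v = w / N"

lemma N_ge_16: "16 \<le> N"
  using N_ge n_ge_4 by linarith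

lemma N_pos: "0 < N"
  using N_ge_16 by linarith

lemma y_le_1: "y \<le> 1"
proof -
  have "1/N \<le> 1" using N_ge_16 by simp
  then show ?thesis using y_le by linarith
qed

lemma w_bounds: "0 \<le> w" "w \<le> 1"
  unfolding w_def using y_nonneg y_le_1 by (simp_all add: power_le_one)

lemma A_nonneg: "0 \<le> A"
proof -
  have "14 * 4 * (69/100) \<le> (N - 2) * real n * L"
    using N_ge_16 n_ge_4 L_ge by (intro mult_mono) auto
  then show ?thesis unfolding A_def by simp
qed

lemma B_eq: "B = A + (N - 2) * L"
  unfolding A_def B_def by (simp add: algebra_simps)

lemma linear_part_ge:
  "- L + L * (real n * (real n + 1) * y^2 * (1 - (real n - 1) * y) / 2)
     + 2 * L / N * (1 - real n^2 * y^2) + y * (1 - real n * y) / N \<le> A * u - B * v"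
proof -
  have "A * u - B * v = L * (1 - w * (1 + n * y)) - L + 2 * L / N * (w * (1 + n * y)) + y * w / N"
    unfolding A_def B_def u_def v_def using N_pos by (simp add: field_simps)
  have w_ge: "1 - n * y \<le> w"
    unfolding w_def using Bernoulli_inequality[of "- y" n] y_le_1 by simp
  have "real n * (real n + 1) * y^2 * (1 - (real n - 1) * y) / 2 \<le> 1 - w * (1 + n * y)"
    unfolding w_def using one_minus_power_mul_ge y_nonneg y_le_1 n_ge_4 by simp
  then have "L * (real n * (real n + 1) * y^2 * (1 - (real n - 1) * y) / 2)
             \<le> L * (1 - w * (1 + n * y))"
    using L_ge by (intro mult_left_mono) auto
  moreover have "2 * L / N * (1 - real n^2 * y^2) \<le> 2 * L / N * (w * (1 + n * y))"
  proof -
    have "(1 - n * y) * (1 + n * y) \<le> w * (1 + n * y)"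
      using w_ge y_nonneg by (intro mult_right_mono) auto
    then show ?thesis
      using L_ge N_pos by (intro mult_left_mono) (auto simp: algebra_simps power2_eq_square)
  qed
  moreover have "y * (1 - n * y) / N \<le> y * w / N"
    using w_ge y_nonneg N_pos by (intro divide_right_mono mult_left_mono) auto
  ultimately show ?thesis using \<open>A * u - B * v = _\<close> by linarith
qed

lemma quadratic_part_ge:
  "- ((N - 2) * L + 2 * (N - 2) * real n * L * y) / (2 * N^2) \<le> A * u^2/2 - B * v^2/2"
proof -
  define C where "C = A * (1 - y)^2 - B"
  have "A * u^2/2 - B * v^2/2 = w^2 * C / (2 * N^2)"
    unfolding C_def u_def v_def using N_pos by (simp add: field_simps power2_eq_square)
  have C_eq: "C = - ((N - 2) * L) - A * (y * (2 - y))"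
    unfolding C_def B_eq by (simp add: algebra_simps power2_eq_square)
  have "0 \<le> A * (y * (2 - y))"
    using A_nonneg y_nonneg y_le_1 by simp
  moreover have "0 \<le> (N - 2) * L" using N_ge_16 L_ge by simp
  ultimately have "C \<le> 0" using C_eq by linarith
  have "A * (y * (2 - y)) \<le> ((N - 2) * real n * L) * (2 * y)"
  proof (rule mult_mono)
    show "A \<le> (N - 2) * real n * L" unfolding A_def by simp
    show "y * (2 - y) \<le> 2 * y" by (simp add: algebra_simps)
  qed (use A_nonneg y_nonneg y_le_1 in \<open>auto simp: A_def\<close>)
  then have "- ((N - 2) * L + 2 * (N - 2) * real n * L * y) \<le> C"
    using C_eq by (simp add: algebra_simps)
  also have "C \<le> w^2 * C"
    using \<open>C \<le> 0\<close> w_bounds power_le_one[of w 2]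
    by (simp add: mult_le_cancel_right1)
  finally have "- ((N - 2) * L + 2 * (N - 2) * real n * L * y) \<le> w^2 * C" .
  then show ?thesis
    unfolding \<open>A * u^2/2 - B * v^2/2 = _\<close> using N_pos by (intro divide_right_mono) auto
qed

lemma cubic_part_le: "B * (v^3 / (3 * (1 - v))) \<le> (real n + 1) * L / (3 * N^2)"
proof -
  have "0 \<le> v" "v \<le> 1/N"
    unfolding v_def using w_bounds N_pos by (simp_all add: divide_right_mono)
  moreover have "1/N < 1" using N_ge_16 by simp
  ultimately have "0 \<le> v^3 / (3 * (1 - v))" by simp
  have "v^3 / (3 * (1 - v)) \<le> (1/N)^3 / (3 * (1 - 1/N))"
    using \<open>0 \<le> v\<close> \<open>v \<le> 1/N\<close> \<open>1/N < 1\<close> N_pos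
    by (intro frac_le power_mono mult_left_mono) (auto simp: field_simps)
  also have "\<dots> = 1 / (3 * N^2 * (N - 1))"
    using N_ge_16 by (simp add: field_simps power2_eq_square power3_eq_cube)
  finally have v_cube: "v^3 / (3 * (1 - v)) \<le> 1 / (3 * N^2 * (N - 1))" .
  have "B \<le> (N - 2) * (real n + 1) * L" unfolding B_def by simp
  also have "\<dots> \<le> (N - 1) * (real n + 1) * L" using L_ge by (intro mult_right_mono) auto
  finally have "B * (v^3 / (3 * (1 - v)))
                \<le> ((N - 1) * (real n + 1) * L) * (1 / (3 * N^2 * (N - 1)))"
    using v_cube \<open>0 \<le> v^3 / (3 * (1 - v))\<close> L_ge N_ge_16 by (intro mult_mono) auto
  also have "\<dots> = (real n + 1) * L / (3 * N^2)"
    using N_ge_16 by (simp add: field_simps)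
  finally show ?thesis .
qed

lemma part_bounds_sum_pos:
  "0 < - y + L * (real n * (real n + 1) * y^2 * (1 - (real n - 1) * y) / 2)
         + 2 * L / N * (1 - real n^2 * y^2) + y * (1 - real n * y) / N
         - ((N - 2) * L + 2 * (N - 2) * real n * L * y) / (2 * N^2) - (real n + 1) * L / (3 * N^2)"
    (is "0 < ?S")
proof -
  define t where "t = N * y"
  have "0 \<le> t" "t \<le> 1"
    unfolding t_def using y_nonneg y_le N_pos by (simp_all add: field_simps)
  let ?n = "real n"
  let ?E = "N * (3*L - 2*t) + 2*L + L * ?n * (?n + 1) * t^2 + 2*t - 2 * ?n * L * t
             - 2 * (?n + 1) * L/3
             - (L * ?n * (?n + 1) * (?n - 1) * t^3 + 4 * L * ?n^2 * t^2 + 2 * ?n * t^2) / N"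
  have "0 < ?E"
    using scaled_minorant_pos[of ?n N L t] n_ge_4 N_ge L_ge \<open>0 \<le> t\<close> \<open>t \<le> 1\<close>
    by simp
  moreover have "0 \<le> 4 * ?n * L * t / N"
    using L_ge N_pos \<open>0 \<le> t\<close> by simp
  moreover have "?S = (?E + 4 * ?n * L * t / N) / (2 * N^2)"
    unfolding t_def using N_pos by (simp add: field_simps power2_eq_square power3_eq_cube)
  ultimately show ?thesis using N_pos by simp
qed

lemma minorant_pos: "0 < L - y + A * (u + u^2/2) - B * (v + v^2/2 + v^3/(3*(1 - v)))"
proof -
  have "A * (u + u^2/2) - B * (v + v^2/2 + v^3/(3*(1 - v)))
        = (A * u - B * v) + (A * u^2/2 - B * v^2/2) - B * (v^3/(3*(1 - v)))"
    by (simp add: algebra_simps)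
  then show ?thesis
    using linear_part_ge quadratic_part_ge cubic_part_le part_bounds_sum_pos by linarith
qed

end

lemma Phi_pos_large_k:
  fixes n :: nat and x :: real
  assumes "4 \<le> n" "1/2 - 1/2^Suc n \<le> x" "x \<le> 1/2"
  shows "0 < Phi (Suc n) ((2^n - 2) * real (Suc n) * ln 2) x"
proof -
  interpret Phi_large_k n "2^n" "ln 2" "1 - 2*x"
    using assms linear_le_two_power ln_2_ge by unfold_locales (simp_all add: field_simps)
  define d where "d = (2^n - 2) * real (Suc n) * ln 2"
  have d_B: "d - 1 = B" unfolding d_def B_def by simp
  moreover have "0 \<le> (2^n - 2) * ln (2::real)" using N_ge_16 by simp
  ultimately have "1 \<le> d" using B_eq A_nonneg by linarith
  then have "d * (1 - 1/Suc n - 1/d) = d - d / Suc n - 1" by (simp add: algebra_simps)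
  also have "\<dots> = A" unfolding d_def A_def by (simp add: field_simps)
  finally have d_A: "d * (1 - 1/Suc n - 1/d) = A" .
  have x: "x = (1 - (1 - 2*x))/2" by simp
  have u: "2 * x^Suc n = u" and v: "x^(Suc n - 1) = v"
    unfolding u_def v_def w_def by (subst (1 2) x, simp add: power_divide)+
  have "1/2^Suc n \<le> (1/2::real)" by (simp add: field_simps)
  then have "0 \<le> x" using assms(2) by linarith
  have "ln 2 - (1 - 2*x) + A * (u + u^2/2) - B * (v + v^2/2 + v^3/(3*(1 - v)))
          \<le> Phi (Suc n) d x"
    by (rule Phi_ge_minorant[of "Suc n" x d, unfolded d_A d_B u v])
       (use assms(1,3) \<open>0 \<le> x\<close> \<open>1 \<le> d\<close> A_nonneg in simp_all)
  then show ?thesis using minorant_pos unfolding d_def by linarith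
qed

theorem lemma3p5:
  fixes k :: nat and x :: real
  assumes "k \<ge> 4"
    and "1/2 - 1 / 2 ^ k \<le> x" and "x \<le> 1/2"
  shows "Phi k (d_lbd k) x > 0"
proof (cases "k = 4")
  case True
  then show ?thesis using Phi_4_pos assms(2,3) by (simp add: d_lbd_def)
next
  case False
  then obtain n where "k = Suc n" "4 \<le> n" using assms(1) by (cases k) auto
  then show ?thesis using Phi_pos_large_k[of n x] assms(2,3) by (simp add: d_lbd_def)
qed

end
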